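(* Let $m,n\in\mathbb{N}$, $a\in\mathbb{R}$, $b\in(a,\infty)$, $f\in\mathscr A_{m,n}$. Then the function $$\mathbb{R}^m\times\mathbb{R}^{n-1}\ni(\theta,x_1,\dots,x_{n-1})\mapsto\int_a^bf(\theta,x_1,\dots,x_n)\,\mathrm dx_n\in\mathbb{R}$$ belongs to $\mathscr A_{m,n-1}$.
   Context: For $n\in\mathbb{N}_0$, $\mathcal P_n$ denotes the set of polynomials $\mathbb{R}^n\to\mathbb{R}$ (with $\mathbb{R}^0=\{0\}$). For $n\in\mathbb{N}$, $\mathcal R_n$ is the set of functions $R\colon\mathbb{R}^n\to\mathbb{R}$ for which there exist $P,Q\in\mathcal P_n$ with $R(x)=P(x)/Q(x)$ if $Q(x)\neq0$ and $R(x)=0$ if $Q(x)=0$. For $m\in\mathbb{N}$, $n\in\mathbb{N}_0$, $\mathscr A_{m,n}$ is the real linear span of all functions $g\colon\mathbb{R}^m\times\mathbb{R}^n\to\mathbb{R}$ of the form $g(\theta,x)=R(\theta)Q(x)\prod_{i=1}^r\mathbb 1_{A_i}\big(P_{i,0}(\theta)+\sum_{j=1}^nP_{i,j}(\theta)x_j\big)$ with $r\in\mathbb{N}$, $A_1,\dots,A_r\in\{\{0\},[0,\infty),(0,\infty)\}$, $R\in\mathcal R_m$, $Q\in\mathcal P_n$, $P_{i,j}\in\mathcal P_m$. *)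

theory Defs
  imports "HOL-Analysis.Analysis"
begin

text \<open>Points of R^n are represented as functions nat => real; only the
coordinates 0..n-1 are used (coordinate x_j of the paper, j = 1..n, is x (j-1)).\<close>

inductive_set poly_fun :: "nat \<Rightarrow> ((nat \<Rightarrow> real) \<Rightarrow> real) set" for n :: nat where
  const: "(\<lambda>x. c) \<in> poly_fun n"
| coord: "i < n \<Longrightarrow> (\<lambda>x. x i) \<in> poly_fun n"
| add: "p \<in> poly_fun n \<Longrightarrow> q \<in> poly_fun n \<Longrightarrow> (\<lambda>x. p x + q x) \<in> poly_fun n"
| mult: "p \<in> poly_fun n \<Longrightarrow> q \<in> poly_fun n \<Longrightarrow> (\<lambda>x. p x * q x) \<in> poly_fun n"

definition rat_fun :: "nat \<Rightarrow> ((nat \<Rightarrow> real) \<Rightarrow> real) set" where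
  "rat_fun n = {R. \<exists>P\<in>poly_fun n. \<exists>Q\<in>poly_fun n.
      \<forall>x. R x = (if Q x \<noteq> 0 then P x / Q x else 0)}"

definition A_gen :: "nat \<Rightarrow> nat \<Rightarrow> ((nat \<Rightarrow> real) \<Rightarrow> (nat \<Rightarrow> real) \<Rightarrow> real) set" where
  "A_gen m n = {g. \<exists>(r::nat) (A::nat \<Rightarrow> real set) R Q (P::nat \<Rightarrow> nat \<Rightarrow> (nat \<Rightarrow> real) \<Rightarrow> real).
      0 < r \<and>
      (\<forall>i<r. A i \<in> {{0}, {0..}, {0<..}}) \<and>
      R \<in> rat_fun m \<and> Q \<in> poly_fun n \<and>
      (\<forall>i<r. \<forall>j\<le>n. P i j \<in> poly_fun m) \<and>
      (\<forall>\<theta> x. g \<theta> x = R \<theta> * Q x *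
         (\<Prod>i<r. indicator (A i) (P i 0 \<theta> + (\<Sum>j=1..n. P i j \<theta> * x (j - 1)))))}"

inductive_set A_space :: "nat \<Rightarrow> nat \<Rightarrow> ((nat \<Rightarrow> real) \<Rightarrow> (nat \<Rightarrow> real) \<Rightarrow> real) set"
  for m n :: nat where
  zero: "(\<lambda>\<theta> x. 0) \<in> A_space m n"
| step: "g \<in> A_gen m n \<Longrightarrow> h \<in> A_space m n \<Longrightarrow>
         (\<lambda>\<theta> x. c * g \<theta> x + h \<theta> x) \<in> A_space m n"

end

theory Submission
  imports Defs
begin

text \<open>
  Substituting t for the last coordinate turns a generator into
  R(\<theta>) G(x,t) 1_S(t), where G is a polynomial in t with coefficients in P_{n-1} and
  S = {t. c_i(\<theta>,x) + e_i(\<theta>) t \<in> A_i for all i}, the c_i being affine in x with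
  polynomial coefficients in \<theta>. One shows by induction on the number of sign conditions
  that the integral of G over [-c1/e1, -c2/e2] \<inter> S, guarded by e1, e2 > 0, lies in
  A_{m,n-1}. A condition with e_i = 0 contributes the factor 1_{A_i}(c_i); one with
  e_i \<noteq> 0 and A_i = {0} only removes a null set; a half-line condition moves one
  endpoint to the max or min with -c_i/e_i, which splits into two guarded integrals
  according to the sign of a cross term c_i e1 - c1 e_i. Without conditions, the integral
  of t^k is a polynomial in the endpoints, which are rational in \<theta> and affine in x.
  Finally [a,b] is the guarded interval with c1 = -a, c2 = -b, e1 = e2 = 1.
\<close>

definition sign_sets :: "real set set" where
  "sign_sets = {{0}, {0..}, {0<..}}"

lemma sign_sets_members: "{0} \<in> sign_sets" "{0..} \<in> sign_sets" "{0<..} \<in> sign_sets"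
  by (simp_all add: sign_sets_def)

lemma poly_fun_uminus: "p \<in> poly_fun n \<Longrightarrow> (\<lambda>x. - p x) \<in> poly_fun n"
  using poly_fun.mult[OF poly_fun.const[of "-1"]] by fastforce

lemma rat_fun_iff_divide:
  "R \<in> rat_fun n \<longleftrightarrow> (\<exists>P\<in>poly_fun n. \<exists>Q\<in>poly_fun n. R = (\<lambda>x. P x / Q x))"
proof -
  have "(if Q x \<noteq> 0 then P x / Q x else 0) = P x / Q x" for P Q :: "(nat \<Rightarrow> real) \<Rightarrow> real" and x
    by simp
  then show ?thesis
    unfolding rat_fun_def by (auto simp: fun_eq_iff)
qed

lemma rat_fun_mult:
  assumes "R1 \<in> rat_fun n" "R2 \<in> rat_fun n"
  shows "(\<lambda>x. R1 x * R2 x) \<in> rat_fun n"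
proof -
  obtain P1 Q1 P2 Q2 where "P1 \<in> poly_fun n" "Q1 \<in> poly_fun n" "P2 \<in> poly_fun n" "Q2 \<in> poly_fun n"
    and "R1 = (\<lambda>x. P1 x / Q1 x)" "R2 = (\<lambda>x. P2 x / Q2 x)"
    using assms unfolding rat_fun_iff_divide by blast
  then show ?thesis
    unfolding rat_fun_iff_divide
    by (intro bexI[of _ "\<lambda>x. P1 x * P2 x"] bexI[of _ "\<lambda>x. Q1 x * Q2 x"] poly_fun.mult) auto
qed

lemma poly_fun_in_rat_fun: "P \<in> poly_fun n \<Longrightarrow> P \<in> rat_fun n"
  unfolding rat_fun_iff_divide by (intro bexI[of _ P] bexI[of _ "\<lambda>x. 1"] poly_fun.const) auto

lemma rat_fun_inverse: "P \<in> poly_fun n \<Longrightarrow> (\<lambda>x. 1 / P x) \<in> rat_fun n"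
  unfolding rat_fun_iff_divide by (intro bexI[of _ "\<lambda>x. 1"] bexI[of _ P] poly_fun.const) auto

definition affine_fun :: "nat \<Rightarrow> nat \<Rightarrow> ((nat \<Rightarrow> real) \<Rightarrow> (nat \<Rightarrow> real) \<Rightarrow> real) set" where
  "affine_fun m n = {L. \<exists>P. (\<forall>j\<le>n. P j \<in> poly_fun m) \<and>
      (\<forall>\<theta> x. L \<theta> x = P 0 \<theta> + (\<Sum>j=1..n. P j \<theta> * x (j - 1)))}"

lemma affine_funE:
  assumes "L \<in> affine_fun m n"
  obtains P where "\<And>j. j \<le> n \<Longrightarrow> P j \<in> poly_fun m"
    "L = (\<lambda>\<theta> x. P 0 \<theta> + (\<Sum>j=1..n. P j \<theta> * x (j - 1)))"
proof -
  obtain P where "\<forall>j\<le>n. P j \<in> poly_fun m"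
    "\<forall>\<theta> x. L \<theta> x = P 0 \<theta> + (\<Sum>j=1..n. P j \<theta> * x (j - 1))"
    using assms unfolding affine_fun_def by blast
  then show thesis
    by (intro that[of P]) (auto simp: fun_eq_iff)
qed

lemma affine_fun_of_poly_fun: "e \<in> poly_fun m \<Longrightarrow> (\<lambda>\<theta> x. e \<theta>) \<in> affine_fun m n"
  unfolding affine_fun_def
  by (intro CollectI exI[of _ "\<lambda>j. if j = 0 then e else (\<lambda>_. 0)"]) (auto intro: poly_fun.const)

lemma affine_fun_lincomb:
  assumes "c \<in> affine_fun m n" "d \<in> affine_fun m n" "e \<in> poly_fun m" "f \<in> poly_fun m"
  shows "(\<lambda>\<theta> x. e \<theta> * c \<theta> x + f \<theta> * d \<theta> x) \<in> affine_fun m n"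
proof -
  obtain P where P: "\<And>j. j \<le> n \<Longrightarrow> P j \<in> poly_fun m"
    and c: "c = (\<lambda>\<theta> x. P 0 \<theta> + (\<Sum>j=1..n. P j \<theta> * x (j - 1)))"
    using assms(1) by (elim affine_funE) auto
  obtain P' where P': "\<And>j. j \<le> n \<Longrightarrow> P' j \<in> poly_fun m"
    and d: "d = (\<lambda>\<theta> x. P' 0 \<theta> + (\<Sum>j=1..n. P' j \<theta> * x (j - 1)))"
    using assms(2) by (elim affine_funE) auto
  show ?thesis
    unfolding affine_fun_def c d
    by (intro CollectI exI[of _ "\<lambda>j \<theta>. e \<theta> * P j \<theta> + f \<theta> * P' j \<theta>"] conjI allI impI
        poly_fun.add poly_fun.mult assms P P')
      (simp_all add: algebra_simps sum.distrib sum_distrib_left)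
qed

lemma affine_fun_uminus: "c \<in> affine_fun m n \<Longrightarrow> (\<lambda>\<theta> x. - c \<theta> x) \<in> affine_fun m n"
  using affine_fun_lincomb[of c m n c "\<lambda>_. -1" "\<lambda>_. 0"] by (simp add: poly_fun.const)

lemma affine_fun_cross:
  assumes "c \<in> affine_fun m n" "d \<in> affine_fun m n" "e \<in> poly_fun m" "f \<in> poly_fun m"
  shows "(\<lambda>\<theta> x. c \<theta> x * f \<theta> - d \<theta> x * e \<theta>) \<in> affine_fun m n"
  using affine_fun_lincomb[OF assms(1,2) assms(4) poly_fun_uminus[OF assms(3)]]
  by (simp add: algebra_simps)

lemma A_space_add:
  "f \<in> A_space m n \<Longrightarrow> g \<in> A_space m n \<Longrightarrow> (\<lambda>\<theta> x. f \<theta> x + g \<theta> x) \<in> A_space m n"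
proof (induction f rule: A_space.induct)
  case zero
  then show ?case by simp
next
  case (step g' h c)
  then have "(\<lambda>\<theta> x. c * g' \<theta> x + (h \<theta> x + g \<theta> x)) \<in> A_space m n"
    by (intro A_space.step) auto
  then show ?case by (simp add: add.assoc)
qed

lemma A_space_cmult: "f \<in> A_space m n \<Longrightarrow> (\<lambda>\<theta> x. c * f \<theta> x) \<in> A_space m n"
proof (induction f rule: A_space.induct)
  case zero
  then show ?case by (simp add: A_space.zero)
next
  case (step g h d)
  then have "(\<lambda>\<theta> x. (c * d) * g \<theta> x + c * h \<theta> x) \<in> A_space m n"
    by (intro A_space.step) auto
  then show ?case by (simp add: algebra_simps)
qed

lemma A_space_diff:
  "f \<in> A_space m n \<Longrightarrow> g \<in> A_space m n \<Longrightarrow> (\<lambda>\<theta> x. f \<theta> x - g \<theta> x) \<in> A_space m n"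
  using A_space_add[OF _ A_space_cmult[of g m n "-1"]] by simp

lemma A_gen_subset_A_space: "A_gen m n \<subseteq> A_space m n"
  using A_space.step[OF _ A_space.zero, of _ m n 1] by auto

lemma A_gen_mult:
  assumes "g1 \<in> A_gen m n" "g2 \<in> A_gen m n"
  shows "(\<lambda>\<theta> x. g1 \<theta> x * g2 \<theta> x) \<in> A_gen m n"
proof -
  obtain r1 :: nat and A1 :: "nat \<Rightarrow> real set" and R1 Q1 and P1 :: "nat \<Rightarrow> nat \<Rightarrow> (nat \<Rightarrow> real) \<Rightarrow> real"
    where g1: "0 < r1" "\<forall>i<r1. A1 i \<in> {{0}, {0..}, {0<..}}" "R1 \<in> rat_fun m" "Q1 \<in> poly_fun n"
      "\<forall>i<r1. \<forall>j\<le>n. P1 i j \<in> poly_fun m"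
      "\<forall>\<theta> x. g1 \<theta> x = R1 \<theta> * Q1 x *
         (\<Prod>i<r1. indicator (A1 i) (P1 i 0 \<theta> + (\<Sum>j=1..n. P1 i j \<theta> * x (j - 1))))"
    using assms(1) unfolding A_gen_def by blast
  obtain r2 :: nat and A2 :: "nat \<Rightarrow> real set" and R2 Q2 and P2 :: "nat \<Rightarrow> nat \<Rightarrow> (nat \<Rightarrow> real) \<Rightarrow> real"
    where g2: "0 < r2" "\<forall>i<r2. A2 i \<in> {{0}, {0..}, {0<..}}" "R2 \<in> rat_fun m" "Q2 \<in> poly_fun n"
      "\<forall>i<r2. \<forall>j\<le>n. P2 i j \<in> poly_fun m"
      "\<forall>\<theta> x. g2 \<theta> x = R2 \<theta> * Q2 x *
         (\<Prod>i<r2. indicator (A2 i) (P2 i 0 \<theta> + (\<Sum>j=1..n. P2 i j \<theta> * x (j - 1))))"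
    using assms(2) unfolding A_gen_def by blast
  define A where "A i = (if i < r1 then A1 i else A2 (i - r1))" for i
  define P where "P i = (if i < r1 then P1 i else P2 (i - r1))" for i
  have prod_split: "(\<Prod>i<r1 + r2. F i) = (\<Prod>i<r1. F i) * (\<Prod>i<r2. F (r1 + i))" for F :: "nat \<Rightarrow> real"
    by (induction r2) (simp_all add: ac_simps)
  show ?thesis
    unfolding A_gen_def
  proof (intro CollectI exI conjI allI impI)
    show "0 < r1 + r2" using g1 by simp
    show "A i \<in> {{0}, {0..}, {0<..}}" if "i < r1 + r2" for i
      using that g1(2) g2(2) by (auto simp: A_def)
    show "P i j \<in> poly_fun m" if "i < r1 + r2" "j \<le> n" for i j
      using that g1(5) g2(5) by (auto simp: P_def)
    show "(\<lambda>\<theta>. R1 \<theta> * R2 \<theta>) \<in> rat_fun m" using g1 g2 by (intro rat_fun_mult)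
    show "(\<lambda>x. Q1 x * Q2 x) \<in> poly_fun n" using g1 g2 by (intro poly_fun.mult)
    show "g1 \<theta> x * g2 \<theta> x = R1 \<theta> * R2 \<theta> * (Q1 x * Q2 x) *
        (\<Prod>i<r1 + r2. indicator (A i) (P i 0 \<theta> + (\<Sum>j=1..n. P i j \<theta> * x (j - 1))))" for \<theta> x
      unfolding prod_split using g1(6) g2(6) by (simp add: A_def P_def algebra_simps)
  qed
qed

lemma A_space_mult_A_gen:
  "f \<in> A_space m n \<Longrightarrow> g \<in> A_gen m n \<Longrightarrow> (\<lambda>\<theta> x. g \<theta> x * f \<theta> x) \<in> A_space m n"
proof (induction f rule: A_space.induct)
  case zero
  then show ?case by (simp add: A_space.zero)
next
  case (step g' h c)
  then have "(\<lambda>\<theta> x. c * (g \<theta> x * g' \<theta> x) + g \<theta> x * h \<theta> x) \<in> A_space m n"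
    by (intro A_space.step A_gen_mult) auto
  then show ?case by (simp add: algebra_simps)
qed

lemma A_space_mult:
  "f \<in> A_space m n \<Longrightarrow> g \<in> A_space m n \<Longrightarrow> (\<lambda>\<theta> x. f \<theta> x * g \<theta> x) \<in> A_space m n"
proof (induction f rule: A_space.induct)
  case zero
  then show ?case by (simp add: A_space.zero)
next
  case (step g' h c)
  then have "(\<lambda>\<theta> x. c * (g' \<theta> x * g \<theta> x) + h \<theta> x * g \<theta> x) \<in> A_space m n"
    using A_space_add A_space_cmult A_space_mult_A_gen by blast
  then show ?case by (simp add: algebra_simps)
qed

lemma A_space_sum:
  "finite I \<Longrightarrow> (\<And>i. i \<in> I \<Longrightarrow> f i \<in> A_space m n) \<Longrightarrow> (\<lambda>\<theta> x. \<Sum>i\<in>I. f i \<theta> x) \<in> A_space m n"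
  by (induction I rule: finite_induct) (auto intro: A_space.zero A_space_add)

lemma A_space_rat_poly_indicator:
  assumes "R \<in> rat_fun m" "Q \<in> poly_fun n" "L \<in> affine_fun m n" "A \<in> sign_sets"
  shows "(\<lambda>\<theta> x. R \<theta> * Q x * indicator A (L \<theta> x)) \<in> A_space m n"
proof -
  obtain P where P: "\<And>j. j \<le> n \<Longrightarrow> P j \<in> poly_fun m"
    and L: "L = (\<lambda>\<theta> x. P 0 \<theta> + (\<Sum>j=1..n. P j \<theta> * x (j - 1)))"
    using assms(3) by (elim affine_funE) auto
  have "(\<lambda>\<theta> x. R \<theta> * Q x * indicator A (L \<theta> x)) \<in> A_gen m n"
    unfolding A_gen_def L
    by (intro CollectI exI[of _ 1] exI[of _ "\<lambda>_. A"] exI[of _ R] exI[of _ Q] exI[of _ "\<lambda>_. P"])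
      (use assms P in \<open>auto simp: sign_sets_def\<close>)
  then show ?thesis
    using A_gen_subset_A_space by blast
qed

lemma A_space_indicator_affine:
  assumes "L \<in> affine_fun m n" "A \<in> sign_sets"
  shows "(\<lambda>\<theta> x. indicator A (L \<theta> x)) \<in> A_space m n"
  using A_space_rat_poly_indicator[OF poly_fun_in_rat_fun[OF poly_fun.const] poly_fun.const assms, of 1 1]
  by simp

lemma A_space_rat_fun:
  assumes "R \<in> rat_fun m"
  shows "(\<lambda>\<theta> x. R \<theta>) \<in> A_space m n"
  using A_space_rat_poly_indicator[OF assms poly_fun.const
      affine_fun_of_poly_fun[OF poly_fun.const] sign_sets_members(2), of 1 1]
  by simp

lemma A_space_const: "(\<lambda>\<theta> x. c) \<in> A_space m n"
  using A_space_rat_fun[OF poly_fun_in_rat_fun[OF poly_fun.const]] .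

lemma A_space_poly_fun:
  assumes "Q \<in> poly_fun n"
  shows "(\<lambda>\<theta> x. Q x) \<in> A_space m n"
  using A_space_rat_poly_indicator[OF poly_fun_in_rat_fun[OF poly_fun.const] assms
      affine_fun_of_poly_fun[OF poly_fun.const] sign_sets_members(2), of 1 1]
  by simp

lemma A_space_affine:
  assumes "L \<in> affine_fun m n"
  shows "L \<in> A_space m n"
proof -
  obtain P where P: "\<And>j. j \<le> n \<Longrightarrow> P j \<in> poly_fun m"
    and L: "L = (\<lambda>\<theta> x. P 0 \<theta> + (\<Sum>j=1..n. P j \<theta> * x (j - 1)))"
    using assms by (elim affine_funE) auto
  show ?thesis
    unfolding L using P
    by (intro A_space_add A_space_sum A_space_mult A_space_rat_fun poly_fun_in_rat_fun
        A_space_poly_fun poly_fun.coord) auto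
qed

lemma A_space_power: "f \<in> A_space m n \<Longrightarrow> (\<lambda>\<theta> x. f \<theta> x ^ k) \<in> A_space m n"
  by (induction k) (auto intro: A_space_const A_space_mult)

inductive_set tpoly_fun :: "nat \<Rightarrow> ((nat \<Rightarrow> real) \<Rightarrow> real \<Rightarrow> real) set" for n :: nat where
  zero: "(\<lambda>x t. 0) \<in> tpoly_fun n"
| monom_add: "q \<in> poly_fun n \<Longrightarrow> h \<in> tpoly_fun n \<Longrightarrow> (\<lambda>x t. q x * t ^ k + h x t) \<in> tpoly_fun n"

lemma tpoly_fun_add:
  "f \<in> tpoly_fun n \<Longrightarrow> g \<in> tpoly_fun n \<Longrightarrow> (\<lambda>x t. f x t + g x t) \<in> tpoly_fun n"
proof (induction f rule: tpoly_fun.induct)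
  case zero
  then show ?case by simp
next
  case (monom_add q h k)
  then have "(\<lambda>x t. q x * t ^ k + (h x t + g x t)) \<in> tpoly_fun n"
    by (intro tpoly_fun.monom_add) auto
  then show ?case by (simp add: add.assoc)
qed

lemma tpoly_fun_monom_mult:
  "g \<in> tpoly_fun n \<Longrightarrow> q \<in> poly_fun n \<Longrightarrow> (\<lambda>x t. q x * t ^ k * g x t) \<in> tpoly_fun n"
proof (induction g rule: tpoly_fun.induct)
  case zero
  then show ?case by (simp add: tpoly_fun.zero)
next
  case (monom_add q' h k')
  then have "(\<lambda>x t. (q x * q' x) * t ^ (k + k') + q x * t ^ k * h x t) \<in> tpoly_fun n"
    by (intro tpoly_fun.monom_add poly_fun.mult) auto
  then show ?case by (simp add: algebra_simps power_add)
qed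

lemma tpoly_fun_mult:
  "f \<in> tpoly_fun n \<Longrightarrow> g \<in> tpoly_fun n \<Longrightarrow> (\<lambda>x t. f x t * g x t) \<in> tpoly_fun n"
proof (induction f rule: tpoly_fun.induct)
  case zero
  then show ?case by (simp add: tpoly_fun.zero)
next
  case (monom_add q h k)
  then have "(\<lambda>x t. q x * t ^ k * g x t + h x t * g x t) \<in> tpoly_fun n"
    by (intro tpoly_fun_add tpoly_fun_monom_mult) auto
  then show ?case by (simp add: algebra_simps)
qed

lemma tpoly_fun_fun_upd:
  assumes "Q \<in> poly_fun (Suc n)"
  shows "(\<lambda>x t. Q (x(n := t))) \<in> tpoly_fun n"
  using assms
proof (induction Q rule: poly_fun.induct)
  case (const c)
  have "(\<lambda>x t. c * t ^ 0 + 0) \<in> tpoly_fun n"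
    by (intro tpoly_fun.monom_add tpoly_fun.zero poly_fun.const)
  then show ?case by simp
next
  case (coord i)
  show ?case
  proof (cases "i = n")
    case True
    have "(\<lambda>x t. 1 * t ^ 1 + 0) \<in> tpoly_fun n"
      by (intro tpoly_fun.monom_add tpoly_fun.zero poly_fun.const)
    then show ?thesis using True by simp
  next
    case False
    with coord have "(\<lambda>x t. x i * t ^ 0 + 0) \<in> tpoly_fun n"
      by (intro tpoly_fun.monom_add tpoly_fun.zero poly_fun.coord) simp
    then show ?thesis using False by simp
  qed
next
  case (add p q)
  then show ?case using tpoly_fun_add by (simp del: fun_upd_apply)
next
  case (mult p q)
  then show ?case using tpoly_fun_mult by (simp del: fun_upd_apply)
qed

lemma continuous_on_tpoly_fun: "G \<in> tpoly_fun n \<Longrightarrow> continuous_on S (G x)"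
  by (induction G rule: tpoly_fun.induct) (auto intro!: continuous_intros)

definition sign_region :: "nat \<Rightarrow> (nat \<Rightarrow> real set) \<Rightarrow> (nat \<Rightarrow> real) \<Rightarrow> (nat \<Rightarrow> real) \<Rightarrow> real set" where
  "sign_region r A c e = {t. \<forall>i<r. c i + e i * t \<in> A i}"

lemma sign_region_0 [simp]: "sign_region 0 A c e = UNIV"
  by (simp add: sign_region_def)

lemma sign_region_Suc:
  "sign_region (Suc r) A c e = {t. c r + e r * t \<in> A r} \<inter> sign_region r A c e"
  by (auto simp: sign_region_def less_Suc_eq)

lemma prod_indicator_sign_region:
  "(\<Prod>i<r. indicator (A i) (c i + e i * t) :: real) = indicator (sign_region r A c e) t"
  by (induction r) (auto simp: sign_region_Suc indicator_def)

lemma integral_power_Icc: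
  "integral {lo..hi} (\<lambda>t. t ^ k) = (if lo \<le> hi then (hi ^ Suc k - lo ^ Suc k) / Suc k else 0)"
proof (cases "lo \<le> hi")
  case True
  have "((\<lambda>t::real. t ^ k) has_integral (hi ^ Suc k / Suc k - lo ^ Suc k / Suc k)) {lo..hi}"
  proof (rule fundamental_theorem_of_calculus[OF True])
    fix x :: real
    have "((\<lambda>t. t ^ Suc k / Suc k) has_real_derivative x ^ k) (at x within {lo..hi})"
      by (intro derivative_eq_intros) auto
    then show "((\<lambda>t. t ^ Suc k / Suc k) has_vector_derivative x ^ k) (at x within {lo..hi})"
      by (simp add: has_real_derivative_iff_has_vector_derivative)
  qed
  then show ?thesis
    using True by (simp add: integral_unique diff_divide_distrib)
qed simp

lemma neg_divide_le_neg_divide_iff: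
  fixes c1 c2 e1 e2 :: real
  shows "0 < e1 \<Longrightarrow> 0 < e2 \<Longrightarrow> -c1/e1 \<le> -c2/e2 \<longleftrightarrow> 0 \<le> c1*e2 - c2*e1"
  by (simp add: field_simps)

text \<open>For e \<noteq> 0 this is, up to the single point -c/e, the part of {lo..hi} where c + e t \<in> A.\<close>
definition Icc_cut :: "real set \<Rightarrow> real \<Rightarrow> real \<Rightarrow> real \<Rightarrow> real \<Rightarrow> real set" where
  "Icc_cut A c e lo hi =
     (if A = {0} then {} else if 0 < e then {max lo (-c/e)..hi} else {lo..min hi (-c/e)})"

lemma Icc_cut_sym_diff:
  fixes c e :: real
  assumes "A \<in> sign_sets" "e \<noteq> 0"
  shows "({lo..hi} \<inter> {t. c + e*t \<in> A}) - Icc_cut A c e lo hi \<union>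
         (Icc_cut A c e lo hi - {lo..hi} \<inter> {t. c + e*t \<in> A}) \<subseteq> {-c/e}"
proof -
  have "c + e*t = 0 \<longleftrightarrow> t = -c/e" for t
    using assms(2) by (auto simp: field_simps)
  moreover have "0 \<le> c + e*t \<longleftrightarrow> -c/e \<le> t" "0 < c + e*t \<longleftrightarrow> -c/e < t" if "0 < e" for t
    using that by (auto simp: field_simps)
  moreover have "0 \<le> c + e*t \<longleftrightarrow> t \<le> -c/e" "0 < c + e*t \<longleftrightarrow> t < -c/e" if "e < 0" for t
    using that by (auto simp: field_simps)
  ultimately show ?thesis
    using assms by (cases "0 < e") (auto simp: Icc_cut_def sign_sets_def)
qed

lemma
  fixes g :: "real \<Rightarrow> 'a::banach"
  assumes "A \<in> sign_sets" "e \<noteq> 0"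
  shows integral_Icc_Int_sign_condition:
      "integral ({lo..hi} \<inter> ({t. c + e*t \<in> A} \<inter> R)) g = integral (Icc_cut A c e lo hi \<inter> R) g"
    and integrable_on_Icc_Int_sign_condition_iff:
      "g integrable_on ({lo..hi} \<inter> ({t. c + e*t \<in> A} \<inter> R)) \<longleftrightarrow>
       g integrable_on (Icc_cut A c e lo hi \<inter> R)"
proof -
  let ?X = "{lo..hi} \<inter> ({t. c + e*t \<in> A} \<inter> R)" and ?Y = "Icc_cut A c e lo hi \<inter> R"
  have "(?X - ?Y) \<union> (?Y - ?X) \<subseteq> {-c/e}"
    using Icc_cut_sym_diff[OF assms, of lo hi] by blast
  then have neg: "negligible ((?X - ?Y) \<union> (?Y - ?X))"
    using negligible_subset negligible_sing by blast
  show "integral ?X g = integral ?Y g"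
    by (rule integral_spike_set; rule negligible_subset[OF neg]) blast+
  show "g integrable_on ?X \<longleftrightarrow> g integrable_on ?Y"
    using integrable_spike_set_eq[OF neg] .
qed

lemma integrable_on_Icc_Int_sign_region:
  fixes h :: "real \<Rightarrow> 'a::banach"
  assumes "continuous_on UNIV h" "\<forall>i<r. A i \<in> sign_sets"
  shows "h integrable_on ({lo..hi} \<inter> sign_region r A c e)"
  using assms(2)
proof (induction r arbitrary: lo hi)
  case 0
  show ?case
    using assms(1) by (auto intro: integrable_continuous_interval continuous_on_subset)
next
  case (Suc r)
  then have IH: "h integrable_on ({l..u} \<inter> sign_region r A c e)" for l u
    by simp
  have "h integrable_on ({lo..hi} \<inter> ({t. c r + e r * t \<in> A r} \<inter> sign_region r A c e))"
  proof (cases "e r = 0")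
    case True
    then show ?thesis
      using IH[of lo hi] by (cases "c r \<in> A r") auto
  next
    case False
    have "h integrable_on (Icc_cut (A r) (c r) (e r) lo hi \<inter> sign_region r A c e)"
      using IH by (auto simp: Icc_cut_def)
    moreover have "A r \<in> sign_sets"
      using Suc.prems by simp
    ultimately show ?thesis
      using integrable_on_Icc_Int_sign_condition_iff[OF _ False] by blast
  qed
  then show ?case
    by (simp add: sign_region_Suc)
qed

text \<open>The integral over [-c1/e1, -c2/e2], guarded by e1, e2 > 0: the guards turn every
  comparison of two such endpoints into a sign condition on a cross term c1 e2 - c2 e1.\<close>
definition guarded_integral ::
    "real set \<Rightarrow> (real \<Rightarrow> real) \<Rightarrow> real \<Rightarrow> real \<Rightarrow> real \<Rightarrow> real \<Rightarrow> real" where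
  "guarded_integral S g c1 e1 c2 e2 =
     indicator {0<..} e1 * indicator {0<..} e2 * integral ({-c1/e1..-c2/e2} \<inter> S) g"

lemma guarded_integral_eq_0:
  "\<not> 0 < e1 \<or> \<not> 0 < e2 \<Longrightarrow> guarded_integral S g c1 e1 c2 e2 = 0"
  by (auto simp: guarded_integral_def)

lemma guarded_integral_lower_cut:
  assumes "0 < e" "A = {0..} \<or> A = {0<..}"
  shows "guarded_integral ({t. c + e*t \<in> A} \<inter> R) g c1 e1 c2 e2 =
    indicator {0..} (c*e1 - c1*e) * guarded_integral R g c1 e1 c2 e2
    + indicator {0<..} e1 * indicator {0<..} (c1*e - c*e1) * guarded_integral R g c e c2 e2"
proof (cases "0 < e1 \<and> 0 < e2")
  case pos: True
  have A: "A \<in> sign_sets" "A \<noteq> {0}"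
    using assms(2) unfolding sign_sets_def by force+
  have cut: "integral ({-c1/e1..-c2/e2} \<inter> ({t. c + e*t \<in> A} \<inter> R)) g =
      integral ({max (-c1/e1) (-c/e)..-c2/e2} \<inter> R) g"
    using integral_Icc_Int_sign_condition[OF A(1), where e = e and lo = "-c1/e1" and hi = "-c2/e2"
        and c = c and R = R and g = g] A(2) assms(1)
    by (simp add: Icc_cut_def)
  have endpoints: "-c/e \<le> -c1/e1 \<longleftrightarrow> 0 \<le> c*e1 - c1*e"
    using assms(1) pos by (intro neg_divide_le_neg_divide_iff) auto
  show ?thesis
  proof (cases "0 \<le> c*e1 - c1*e")
    case True
    then have "max (-c1/e1) (-c/e) = -c1/e1"
      using endpoints by (simp only: max_absorb1)
    then show ?thesis
      using pos True unfolding guarded_integral_def cut by (simp add: indicator_def)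
  next
    case False
    then have "max (-c1/e1) (-c/e) = -c/e"
      using endpoints by (intro max_absorb2) linarith
    then show ?thesis
      using pos False assms(1) unfolding guarded_integral_def cut by (simp add: indicator_def)
  qed
qed (auto simp: guarded_integral_eq_0)

lemma guarded_integral_upper_cut:
  assumes "e < 0" "A = {0..} \<or> A = {0<..}"
  shows "guarded_integral ({t. c + e*t \<in> A} \<inter> R) g c1 e1 c2 e2 =
    indicator {0..} (c*e2 - c2*e) * guarded_integral R g c1 e1 c2 e2
    + indicator {0<..} e2 * indicator {0<..} (c2*e - c*e2) * guarded_integral R g c1 e1 (-c) (-e)"
proof (cases "0 < e1 \<and> 0 < e2")
  case pos: True
  have A: "A \<in> sign_sets" "A \<noteq> {0}"
    using assms(2) unfolding sign_sets_def by force+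
  have cut: "integral ({-c1/e1..-c2/e2} \<inter> ({t. c + e*t \<in> A} \<inter> R)) g =
      integral ({-c1/e1..min (-c2/e2) (-c/e)} \<inter> R) g"
    using integral_Icc_Int_sign_condition[OF A(1), where e = e and lo = "-c1/e1" and hi = "-c2/e2"
        and c = c and R = R and g = g] A(2) assms(1)
    by (simp add: Icc_cut_def)
  have "-c2/e2 \<le> -(-c)/(-e) \<longleftrightarrow> 0 \<le> c2*(-e) - (-c)*e2"
    using assms(1) pos by (intro neg_divide_le_neg_divide_iff) auto
  then have endpoints: "-c2/e2 \<le> -c/e \<longleftrightarrow> 0 \<le> c*e2 - c2*e"
    by (simp add: algebra_simps)
  show ?thesis
  proof (cases "0 \<le> c*e2 - c2*e")
    case True
    then have "min (-c2/e2) (-c/e) = -c2/e2"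
      using endpoints by (simp only: min_absorb1)
    then show ?thesis
      using pos True unfolding guarded_integral_def cut by (simp add: indicator_def)
  next
    case False
    then have "min (-c2/e2) (-c/e) = -(-c)/(-e)"
      using endpoints by (simp add: min_absorb2)
    then show ?thesis
      using pos False assms(1) unfolding guarded_integral_def cut by (simp add: indicator_def)
  qed
qed (auto simp: guarded_integral_eq_0)

lemma guarded_integral_Int_sign_condition:
  assumes "A \<in> sign_sets"
  shows "guarded_integral ({t. c + e*t \<in> A} \<inter> R) g c1 e1 c2 e2 =
    indicator {0} e * indicator A c * guarded_integral R g c1 e1 c2 e2
    + of_bool (A \<noteq> {0}) *
      (indicator {0<..} e *
         (indicator {0..} (c*e1 - c1*e) * guarded_integral R g c1 e1 c2 e2
          + indicator {0<..} e1 * indicator {0<..} (c1*e - c*e1) * guarded_integral R g c e c2 e2)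
       + indicator {0<..} (-e) *
         (indicator {0..} (c*e2 - c2*e) * guarded_integral R g c1 e1 c2 e2
          + indicator {0<..} e2 * indicator {0<..} (c2*e - c*e2) * guarded_integral R g c1 e1 (-c) (-e)))"
proof -
  consider "e = 0" | "e \<noteq> 0" "A = {0}" | "0 < e" "A \<noteq> {0}" | "e < 0" "A \<noteq> {0}"
    by fastforce
  then show ?thesis
  proof cases
    case 1
    then show ?thesis
      by (cases "c \<in> A") (auto simp: guarded_integral_def)
  next
    case 2
    then show ?thesis
      using integral_Icc_Int_sign_condition[OF assms 2(1), where lo = "-c1/e1" and hi = "-c2/e2"]
      by (auto simp: guarded_integral_def Icc_cut_def)
  next
    case 3
    then show ?thesis
      using guarded_integral_lower_cut[of e A] assms by (auto simp: sign_sets_def)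
  next
    case 4
    then show ?thesis
      using guarded_integral_upper_cut[of e A] assms by (auto simp: sign_sets_def)
  qed
qed

lemma guarded_integral_power:
  "guarded_integral UNIV (\<lambda>t. t ^ k) c1 e1 c2 e2 =
     indicator {0<..} e1 * indicator {0<..} e2 * indicator {0..} (c1*e2 - c2*e1) *
     ((-c2/e2) ^ Suc k - (-c1/e1) ^ Suc k) / Suc k"
proof (cases "0 < e1 \<and> 0 < e2")
  case True
  then show ?thesis
    unfolding guarded_integral_def Int_UNIV_right integral_power_Icc
    using neg_divide_le_neg_divide_iff[of e1 e2 c1 c2] by (simp add: indicator_def)
qed (auto simp: guarded_integral_def)

lemma guarded_integral_lincomb:
  assumes "continuous_on UNIV f" "continuous_on UNIV h"
  shows "guarded_integral UNIV (\<lambda>t. q * f t + h t) c1 e1 c2 e2 =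
    q * guarded_integral UNIV f c1 e1 c2 e2 + guarded_integral UNIV h c1 e1 c2 e2"
proof -
  have f: "f integrable_on {-c1/e1..-c2/e2}" and h: "h integrable_on {-c1/e1..-c2/e2}"
    using assms by (auto intro: integrable_continuous_interval continuous_on_subset)
  have "integral {-c1/e1..-c2/e2} (\<lambda>t. q * f t + h t) =
      q * integral {-c1/e1..-c2/e2} f + integral {-c1/e1..-c2/e2} h"
    using integral_add[OF integrable_on_cmult_left[OF f, of q] h] by simp
  then show ?thesis
    unfolding guarded_integral_def Int_UNIV_right by (simp add: algebra_simps)
qed

lemma A_space_guarded_integral_tpoly_fun:
  assumes "G \<in> tpoly_fun N" "c1 \<in> affine_fun m N" "e1 \<in> poly_fun m"
    "c2 \<in> affine_fun m N" "e2 \<in> poly_fun m"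
  shows "(\<lambda>\<theta> x. guarded_integral UNIV (G x) (c1 \<theta> x) (e1 \<theta>) (c2 \<theta> x) (e2 \<theta>)) \<in> A_space m N"
  using assms(1)
proof (induction G rule: tpoly_fun.induct)
  case zero
  then show ?case
    by (simp add: guarded_integral_def A_space.zero)
next
  case (monom_add q h k)
  have "(\<lambda>\<theta> x. indicator {0<..} (e1 \<theta>) * indicator {0<..} (e2 \<theta>) *
      indicator {0..} (c1 \<theta> x * e2 \<theta> - c2 \<theta> x * e1 \<theta>) *
      ((- c2 \<theta> x * (1 / e2 \<theta>)) ^ Suc k - (- c1 \<theta> x * (1 / e1 \<theta>)) ^ Suc k) * (1 / Suc k))
      \<in> A_space m N"
    using assms(2-5)
    by (intro A_space_mult A_space_diff A_space_power A_space_const A_space_indicator_affine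
        A_space_rat_fun rat_fun_inverse affine_fun_of_poly_fun affine_fun_cross affine_fun_uminus
        sign_sets_members A_space_affine)
  then have power: "(\<lambda>\<theta> x. guarded_integral UNIV (\<lambda>t. t ^ k) (c1 \<theta> x) (e1 \<theta>) (c2 \<theta> x) (e2 \<theta>))
      \<in> A_space m N"
    unfolding guarded_integral_power by simp
  have "guarded_integral UNIV (\<lambda>t. q x * t ^ k + h x t) c1' e1' c2' e2' =
      q x * guarded_integral UNIV (\<lambda>t. t ^ k) c1' e1' c2' e2' + guarded_integral UNIV (h x) c1' e1' c2' e2'"
    for x c1' e1' c2' e2'
    using continuous_on_tpoly_fun[OF monom_add.hyps(2)]
    by (intro guarded_integral_lincomb continuous_intros)
  then show ?case
    using A_space_add[OF A_space_mult[OF A_space_poly_fun[OF monom_add.hyps(1)] power] monom_add.IH]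
    by simp
qed

lemma A_space_guarded_integral_sign_region:
  assumes "\<forall>i<r. A i \<in> sign_sets" "\<forall>i<r. cc i \<in> affine_fun m N" "\<forall>i<r. ee i \<in> poly_fun m"
    and "G \<in> tpoly_fun N"
    and "c1 \<in> affine_fun m N" "e1 \<in> poly_fun m" "c2 \<in> affine_fun m N" "e2 \<in> poly_fun m"
  shows "(\<lambda>\<theta> x. guarded_integral (sign_region r A (\<lambda>i. cc i \<theta> x) (\<lambda>i. ee i \<theta>)) (G x)
      (c1 \<theta> x) (e1 \<theta>) (c2 \<theta> x) (e2 \<theta>)) \<in> A_space m N"
  using assms(1-3,5-8)
proof (induction r arbitrary: c1 e1 c2 e2)
  case 0
  then show ?case
    using A_space_guarded_integral_tpoly_fun[OF assms(4)] by simp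
next
  case (Suc r)
  let ?S = "\<lambda>\<theta> x. sign_region r A (\<lambda>i. cc i \<theta> x) (\<lambda>i. ee i \<theta>)"
  have IH: "(\<lambda>\<theta> x. guarded_integral (?S \<theta> x) (G x) (c1' \<theta> x) (e1' \<theta>) (c2' \<theta> x) (e2' \<theta>))
      \<in> A_space m N"
    if "c1' \<in> affine_fun m N" "e1' \<in> poly_fun m" "c2' \<in> affine_fun m N" "e2' \<in> poly_fun m"
    for c1' e1' c2' e2'
    using Suc.IH Suc.prems that by simp
  have A: "A r \<in> sign_sets" and c: "cc r \<in> affine_fun m N" and e: "ee r \<in> poly_fun m"
    using Suc.prems by auto
  show ?case
    unfolding sign_region_Suc guarded_integral_Int_sign_condition[OF A]
    using Suc.prems(4-7) A c e
    by (intro A_space_add A_space_mult A_space_const IH A_space_indicator_affine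
        affine_fun_cross affine_fun_uminus affine_fun_of_poly_fun poly_fun_uminus sign_sets_members)
qed

lemma sum_fun_upd_last:
  fixes p :: "nat \<Rightarrow> real"
  shows "(\<Sum>j=1..Suc N. p j * (x(N := t)) (j - 1)) = (\<Sum>j=1..N. p j * x (j - 1)) + p (Suc N) * t"
proof -
  have "(\<Sum>j=1..N. p j * (x(N := t)) (j - 1)) = (\<Sum>j=1..N. p j * x (j - 1))"
    by (rule sum.cong) auto
  then show ?thesis
    by simp
qed

lemma A_gen_fun_upd_last:
  assumes "g \<in> A_gen m (Suc N)"
  obtains R G r A cc ee where "R \<in> rat_fun m" "G \<in> tpoly_fun N" "\<forall>i<r. A i \<in> sign_sets"
    "\<forall>i<r. cc i \<in> affine_fun m N" "\<forall>i<r. ee i \<in> poly_fun m"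
    "\<And>\<theta> x t. g \<theta> (x(N := t)) =
       R \<theta> * indicator (sign_region r A (\<lambda>i. cc i \<theta> x) (\<lambda>i. ee i \<theta>)) t * G x t"
proof -
  obtain r :: nat and A :: "nat \<Rightarrow> real set" and R Q and P :: "nat \<Rightarrow> nat \<Rightarrow> (nat \<Rightarrow> real) \<Rightarrow> real"
    where g: "0 < r" "\<forall>i<r. A i \<in> {{0}, {0..}, {0<..}}" "R \<in> rat_fun m"
      "Q \<in> poly_fun (Suc N)" "\<forall>i<r. \<forall>j\<le>Suc N. P i j \<in> poly_fun m"
      "\<forall>\<theta> x. g \<theta> x = R \<theta> * Q x *
         (\<Prod>i<r. indicator (A i) (P i 0 \<theta> + (\<Sum>j=1..Suc N. P i j \<theta> * x (j - 1))))"
    using assms unfolding A_gen_def mem_Collect_eq by (elim exE conjE) blast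
  define cc where "cc i \<theta> x = P i 0 \<theta> + (\<Sum>j=1..N. P i j \<theta> * x (j - 1))" for i \<theta> x
  define ee where "ee i = P i (Suc N)" for i
  have affine: "P i 0 \<theta> + (\<Sum>j=1..Suc N. P i j \<theta> * (x(N := t)) (j - 1)) = cc i \<theta> x + ee i \<theta> * t"
    for i \<theta> x t
    unfolding sum_fun_upd_last cc_def ee_def by simp
  show thesis
  proof (rule that)
    show "R \<in> rat_fun m"
      by (fact g(3))
    show "(\<lambda>x t. Q (x(N := t))) \<in> tpoly_fun N"
      by (rule tpoly_fun_fun_upd[OF g(4)])
    show "\<forall>i<r. A i \<in> sign_sets"
      using g(2) by (simp add: sign_sets_def)
    show "\<forall>i<r. cc i \<in> affine_fun m N"
    proof (intro allI impI)
      fix i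
      assume "i < r"
      then show "cc i \<in> affine_fun m N"
        unfolding affine_fun_def cc_def using g(5) by (intro CollectI exI[of _ "P i"]) auto
    qed
    show "\<forall>i<r. ee i \<in> poly_fun m"
      using g(5) by (simp add: ee_def)
    fix \<theta> x t
    have "g \<theta> (x(N := t)) = R \<theta> * Q (x(N := t)) *
        (\<Prod>i<r. indicator (A i) (P i 0 \<theta> + (\<Sum>j=1..Suc N. P i j \<theta> * (x(N := t)) (j - 1))))"
      using g(6) by blast
    also have "\<dots> = R \<theta> * Q (x(N := t)) * indicator (sign_region r A (\<lambda>i. cc i \<theta> x) (\<lambda>i. ee i \<theta>)) t"
      unfolding affine prod_indicator_sign_region ..
    finally show "g \<theta> (x(N := t)) =
        R \<theta> * indicator (sign_region r A (\<lambda>i. cc i \<theta> x) (\<lambda>i. ee i \<theta>)) t * Q (x(N := t))"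
      by (simp only: ac_simps)
  qed
qed

lemma A_gen_integrable_on_last:
  assumes "g \<in> A_gen m (Suc N)"
  shows "(\<lambda>t. g \<theta> (x(N := t))) integrable_on {a..b}"
proof -
  obtain R G r A cc ee where "R \<in> rat_fun m" and G: "G \<in> tpoly_fun N"
    and A: "\<forall>i<r. A i \<in> sign_sets" and "\<forall>i<r. cc i \<in> affine_fun m N" "\<forall>i<r. ee i \<in> poly_fun m"
    and g: "\<And>\<theta> x t. g \<theta> (x(N := t)) =
       R \<theta> * indicator (sign_region r A (\<lambda>i. cc i \<theta> x) (\<lambda>i. ee i \<theta>)) t * G x t"
    using assms by (elim A_gen_fun_upd_last) auto
  let ?S = "sign_region r A (\<lambda>i. cc i \<theta> x) (\<lambda>i. ee i \<theta>)"
  have "G x integrable_on (?S \<inter> {a..b})"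
    using integrable_on_Icc_Int_sign_region[OF continuous_on_tpoly_fun[OF G] A] by (simp add: Int_commute)
  then have "(\<lambda>t. R \<theta> * (if t \<in> ?S then G x t else 0)) integrable_on {a..b}"
    using integrable_cmul[of "\<lambda>t. if t \<in> ?S then G x t else 0" "{a..b}" "R \<theta>"]
    by (simp add: integrable_restrict_Int)
  then show ?thesis
    by (simp add: g indicator_times_eq_if mult.assoc)
qed

lemma A_gen_integral_last:
  assumes "g \<in> A_gen m (Suc N)"
  shows "(\<lambda>\<theta> x. integral {a..b} (\<lambda>t. g \<theta> (x(N := t)))) \<in> A_space m N"
proof -
  obtain R G r A cc ee where R: "R \<in> rat_fun m"
    and data: "G \<in> tpoly_fun N" "\<forall>i<r. A i \<in> sign_sets" "\<forall>i<r. cc i \<in> affine_fun m N"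
      "\<forall>i<r. ee i \<in> poly_fun m"
    and g: "\<And>\<theta> x t. g \<theta> (x(N := t)) =
       R \<theta> * indicator (sign_region r A (\<lambda>i. cc i \<theta> x) (\<lambda>i. ee i \<theta>)) t * G x t"
    using assms by (elim A_gen_fun_upd_last) auto
  let ?S = "\<lambda>\<theta> x. sign_region r A (\<lambda>i. cc i \<theta> x) (\<lambda>i. ee i \<theta>)"
  have "integral {a..b} (\<lambda>t. g \<theta> (x(N := t))) = R \<theta> * guarded_integral (?S \<theta> x) (G x) (-a) 1 (-b) 1"
    for \<theta> x
    by (simp add: g guarded_integral_def indicator_times_eq_if mult.assoc integral_restrict_Int Int_commute)
  moreover have "(\<lambda>\<theta> x. -a) \<in> affine_fun m N" "(\<lambda>\<theta> x. -b) \<in> affine_fun m N" "(\<lambda>\<theta>. 1) \<in> poly_fun m"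
    by (intro affine_fun_of_poly_fun poly_fun.const)+
  then have "(\<lambda>\<theta> x. guarded_integral (?S \<theta> x) (G x) (-a) 1 (-b) 1) \<in> A_space m N"
    using A_space_guarded_integral_sign_region[OF data(2,3,4,1)] by blast
  ultimately show ?thesis
    using A_space_mult[OF A_space_rat_fun[OF R]] by simp
qed

lemma A_space_integrable_on_last:
  assumes "f \<in> A_space m (Suc N)"
  shows "(\<lambda>t. f \<theta> (x(N := t))) integrable_on {a..b}"
  using assms
proof (induction f rule: A_space.induct)
  case zero
  then show ?case by (simp add: integrable_0)
next
  case (step g h c)
  then show ?case
    using integrable_add[OF integrable_on_cmult_left[OF A_gen_integrable_on_last[OF step.hyps(1)], of c]
        step.IH]
    by (simp del: fun_upd_apply)
qed

lemma A_space_integral_last: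
  assumes "f \<in> A_space m (Suc N)"
  shows "(\<lambda>\<theta> x. integral {a..b} (\<lambda>t. f \<theta> (x(N := t)))) \<in> A_space m N"
  using assms
proof (induction f rule: A_space.induct)
  case zero
  then show ?case by (simp add: A_space.zero)
next
  case (step g h c)
  have "integral {a..b} (\<lambda>t. c * g \<theta> (x(N := t)) + h \<theta> (x(N := t))) =
      c * integral {a..b} (\<lambda>t. g \<theta> (x(N := t))) + integral {a..b} (\<lambda>t. h \<theta> (x(N := t)))" for \<theta> x
    using integral_add[OF integrable_on_cmult_left[OF A_gen_integrable_on_last[OF step.hyps(1)], of c]
        A_space_integrable_on_last[OF step.hyps(2)]]
    by (simp del: fun_upd_apply)
  then show ?case
    using A_space_add[OF A_space_cmult[OF A_gen_integral_last[OF step.hyps(1), where a = a and b = b]]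
        step.IH]
    by (simp del: fun_upd_apply)
qed

theorem proposition4p8:
  fixes m n :: nat and a b :: real
    and f :: "(nat \<Rightarrow> real) \<Rightarrow> (nat \<Rightarrow> real) \<Rightarrow> real"
  assumes "1 \<le> m" and "1 \<le> n" and "a < b"
    and "f \<in> A_space m n"
  shows "(\<lambda>\<theta> x. integral {a..b} (\<lambda>t. f \<theta> (x(n - 1 := t)))) \<in> A_space m (n - 1)"
proof -
  obtain N where "n = Suc N"
    using assms(2) by (cases n) auto
  then show ?thesis
    using A_space_integral_last assms(4) by simp
qed

end
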